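(* Let $G$ be a finite group. (1) The Fitting subgroup $\mathrm{Fit}(G)$ is atomically universally definable. (2) If $N\le H\le G$ with $N\trianglelefteq G$, $H/N$ atomically universally definable in $G/N$ and $N$ atomically universally definable in $G$, then $H$ is atomically universally definable in $G$. (3) All terms $\mathcal{U}_iG$ of the upper Fitting series are atomically universally definable. (4) If $H\le G$ is inducible, then the centralizer $C_G(H)=\{g\in G: gh=hg\text{ for all }h\in H\}$ is atomically universally definable.
   Context: An expression over $G$ is a word over $G\cup\mathcal{X}\cup\mathcal{X}^{-1}$ ($\mathcal{X}$ variables, $\mathcal{X}^{-1}$ formal inverses), evaluated under assignments $\sigma:\mathcal{X}\to G$ extended by $\sigma(X^{-1})=\sigma(X)^{-1}$, $\sigma(g)=g$. A subset $S\subseteq G$ is inducible if there is an expression $\alpha$ with $S=\{\sigma(\alpha):\sigma:\mathcal{X}\to G\}$. A subset $S\subseteq G$ is atomically universally definable if there is an expression $\alpha$ over variables $\{X,Y_1,Y_2,\dots\}$ such that $S=\{g\in G: (\sigma\cup[X\mapsto g])(\alpha)=1\text{ for all }\sigma:\{Y_1,Y_2,\dots\}\to G\}$. $\mathrm{Fit}(G)$ is the largest nilpotent normal subgroup of $G$; the upper Fitting series is $\mathcal{U}_0G=1$, $\mathcal{U}_{i+1}G/\mathcal{U}_iG=\mathrm{Fit}(G/\mathcal{U}_iG)$. *)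

theory Defs
  imports "HOL-Algebra.Algebra"
begin

datatype 'g atom = Const 'g | Var nat | InvVar nat

type_synonym 'g expr = "'g atom list"

definition expr_over :: "('g, 'b) monoid_scheme \<Rightarrow> 'g expr \<Rightarrow> bool" where
  "expr_over G w \<longleftrightarrow> (\<forall>g. Const g \<in> set w \<longrightarrow> g \<in> carrier G)"

fun atom_val :: "('g, 'b) monoid_scheme \<Rightarrow> (nat \<Rightarrow> 'g) \<Rightarrow> 'g atom \<Rightarrow> 'g" where
  "atom_val G \<sigma> (Const g) = g"
| "atom_val G \<sigma> (Var i) = \<sigma> i"
| "atom_val G \<sigma> (InvVar i) = inv\<^bsub>G\<^esub> (\<sigma> i)"

fun expr_eval :: "('g, 'b) monoid_scheme \<Rightarrow> (nat \<Rightarrow> 'g) \<Rightarrow> 'g expr \<Rightarrow> 'g" where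
  "expr_eval G \<sigma> [] = \<one>\<^bsub>G\<^esub>"
| "expr_eval G \<sigma> (a # w) = atom_val G \<sigma> a \<otimes>\<^bsub>G\<^esub> expr_eval G \<sigma> w"

definition assignment :: "('g, 'b) monoid_scheme \<Rightarrow> (nat \<Rightarrow> 'g) \<Rightarrow> bool" where
  "assignment G \<sigma> \<longleftrightarrow> (\<forall>i. \<sigma> i \<in> carrier G)"

definition inducible :: "('g, 'b) monoid_scheme \<Rightarrow> 'g set \<Rightarrow> bool" where
  "inducible G S \<longleftrightarrow> (\<exists>\<alpha>. expr_over G \<alpha> \<and> S = {expr_eval G \<sigma> \<alpha> | \<sigma>. assignment G \<sigma>})"

text \<open>Atomically universally definable: variable 0 plays the role of X, variables
 1, 2, ... the roles of Y1, Y2, ...\<close>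
definition aud :: "('g, 'b) monoid_scheme \<Rightarrow> 'g set \<Rightarrow> bool" where
  "aud G S \<longleftrightarrow> (\<exists>\<alpha>. expr_over G \<alpha> \<and>
      S = {g \<in> carrier G. \<forall>\<sigma>. assignment G \<sigma> \<longrightarrow> expr_eval G (\<sigma>(0 := g)) \<alpha> = \<one>\<^bsub>G\<^esub>})"

definition comm_subgroup :: "('g, 'b) monoid_scheme \<Rightarrow> 'g set \<Rightarrow> 'g set \<Rightarrow> 'g set" where
  "comm_subgroup G A B = generate G
     {x \<otimes>\<^bsub>G\<^esub> y \<otimes>\<^bsub>G\<^esub> inv\<^bsub>G\<^esub> x \<otimes>\<^bsub>G\<^esub> inv\<^bsub>G\<^esub> y | x y. x \<in> A \<and> y \<in> B}"

primrec lower_central :: "('g, 'b) monoid_scheme \<Rightarrow> nat \<Rightarrow> 'g set" where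
  "lower_central G 0 = carrier G"
| "lower_central G (Suc n) = comm_subgroup G (lower_central G n) (carrier G)"

definition nilpotent :: "('g, 'b) monoid_scheme \<Rightarrow> bool" where
  "nilpotent G \<longleftrightarrow> group G \<and> (\<exists>n. lower_central G n = {\<one>\<^bsub>G\<^esub>})"

definition Fitting :: "('g, 'b) monoid_scheme \<Rightarrow> 'g set" where
  "Fitting G = (THE N. N \<lhd> G \<and> nilpotent (G\<lparr>carrier := N\<rparr>) \<and>
      (\<forall>M. M \<lhd> G \<and> nilpotent (G\<lparr>carrier := M\<rparr>) \<longrightarrow> M \<subseteq> N))"

text \<open>Upper Fitting series: U 0 = 1, U (i+1) is the preimage of Fit(G / U i)
 (the union of the cosets belonging to Fit(G/U i)).\<close>
primrec upper_Fitting :: "('g, 'b) monoid_scheme \<Rightarrow> nat \<Rightarrow> 'g set" where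
  "upper_Fitting G 0 = {\<one>\<^bsub>G\<^esub>}"
| "upper_Fitting G (Suc i) = \<Union> (Fitting (G Mod upper_Fitting G i))"

end

theory Submission
  imports Defs
begin

text \<open>
  (1) Let c be such that the lower central series of the Fitting subgroup F reaches 1 after c
  steps. Then g lies in F iff every left-normed commutator [g^y0, g^y1, ..., g^yc] of
  conjugates of g vanishes: for g in F these commutators lie in the c-th term of the lower
  central series of F, and conversely their vanishing makes the normal closure of g nilpotent,
  so that it is contained in F. The latter uses Fitting's theorem that the product of two
  nilpotent normal subgroups is nilpotent, which is also what makes F the largest nilpotent
  normal subgroup.

  (2) An expression defining H/N in G/N becomes an expression over G by replacing each
  constant coset by a representative; its values then lie in N exactly when the original
  expression evaluates to 1 in G/N. Substituting it for X in an expression defining N, with the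
  two sets of universal variables kept apart, defines H.

  (3) follows by induction on i from (1), applied to the quotient by the i-th term, and (2).

  (4) If H is the set of values of w, then the centralizer of H is defined by the commutator
  [X, w(Y)].
\<close>

fun inv_atom :: "('g, 'b) monoid_scheme \<Rightarrow> 'g atom \<Rightarrow> 'g atom" where
  "inv_atom G (Const g) = Const (inv\<^bsub>G\<^esub> g)"
| "inv_atom G (Var i) = InvVar i"
| "inv_atom G (InvVar i) = Var i"

fun inv_expr :: "('g, 'b) monoid_scheme \<Rightarrow> 'g expr \<Rightarrow> 'g expr" where
  "inv_expr G [] = []"
| "inv_expr G (a # w) = inv_expr G w @ [inv_atom G a]"

fun subst_atom :: "('g, 'b) monoid_scheme \<Rightarrow> (nat \<Rightarrow> 'g expr) \<Rightarrow> 'g atom \<Rightarrow> 'g expr" where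
  "subst_atom G f (Const g) = [Const g]"
| "subst_atom G f (Var i) = f i"
| "subst_atom G f (InvVar i) = inv_expr G (f i)"

fun subst :: "('g, 'b) monoid_scheme \<Rightarrow> (nat \<Rightarrow> 'g expr) \<Rightarrow> 'g expr \<Rightarrow> 'g expr" where
  "subst G f [] = []"
| "subst G f (a # w) = subst_atom G f a @ subst G f w"

definition rename :: "('g, 'b) monoid_scheme \<Rightarrow> (nat \<Rightarrow> nat) \<Rightarrow> 'g expr \<Rightarrow> 'g expr" where
  "rename G r = subst G (\<lambda>i. [Var (r i)])"

definition commutator :: "('g, 'b) monoid_scheme \<Rightarrow> 'g \<Rightarrow> 'g \<Rightarrow> 'g" where
  "commutator G x y = x \<otimes>\<^bsub>G\<^esub> y \<otimes>\<^bsub>G\<^esub> inv\<^bsub>G\<^esub> x \<otimes>\<^bsub>G\<^esub> inv\<^bsub>G\<^esub> y"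

definition comm_expr :: "('g, 'b) monoid_scheme \<Rightarrow> 'g expr \<Rightarrow> 'g expr \<Rightarrow> 'g expr" where
  "comm_expr G u v = u @ v @ inv_expr G u @ inv_expr G v"

lemma expr_over_Nil [simp]: "expr_over G []"
  by (simp add: expr_over_def)

lemma expr_over_Cons [simp]:
  "expr_over G (a # w) \<longleftrightarrow> (\<forall>g. a = Const g \<longrightarrow> g \<in> carrier G) \<and> expr_over G w"
  by (auto simp: expr_over_def)

lemma expr_over_append [simp]: "expr_over G (u @ v) \<longleftrightarrow> expr_over G u \<and> expr_over G v"
  by (auto simp: expr_over_def)

lemma assignment_upd [simp]: "assignment G \<sigma> \<Longrightarrow> g \<in> carrier G \<Longrightarrow> assignment G (\<sigma>(i := g))"
  by (simp add: assignment_def)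

lemma assignment_comp [simp]: "assignment G \<sigma> \<Longrightarrow> assignment G (\<sigma> \<circ> r)"
  by (simp add: assignment_def)

context group
begin

lemma all_assignment_comp_Suc:
  "(\<forall>\<sigma>. assignment G \<sigma> \<longrightarrow> P (\<sigma> \<circ> Suc)) \<longleftrightarrow> (\<forall>\<sigma>. assignment G \<sigma> \<longrightarrow> P \<sigma>)"
proof (intro iffI allI impI)
  fix \<sigma> assume "\<forall>\<sigma>. assignment G \<sigma> \<longrightarrow> P (\<sigma> \<circ> Suc)" and \<sigma>: "assignment G \<sigma>"
  moreover have "assignment G (case_nat \<one> \<sigma>)" and "case_nat \<one> \<sigma> \<circ> Suc = \<sigma>"
    using \<sigma> by (auto simp: assignment_def split: nat.split)
  ultimately show "P \<sigma>"
    by metis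
qed simp

lemma expr_over_inv_expr [simp]: "expr_over G w \<Longrightarrow> expr_over G (inv_expr G w)"
proof (induction w)
  case (Cons a w)
  then show ?case by (cases a) auto
qed simp

lemma expr_over_subst [simp]:
  "expr_over G w \<Longrightarrow> (\<And>i. expr_over G (f i)) \<Longrightarrow> expr_over G (subst G f w)"
proof (induction w)
  case (Cons a w)
  then show ?case by (cases a) auto
qed simp

lemma expr_over_rename [simp]: "expr_over G w \<Longrightarrow> expr_over G (rename G r w)"
  by (simp add: rename_def)

lemma expr_over_comm_expr [simp]:
  "expr_over G u \<Longrightarrow> expr_over G v \<Longrightarrow> expr_over G (comm_expr G u v)"
  by (simp add: comm_expr_def)

lemma atom_val_closed:
  "assignment G \<sigma> \<Longrightarrow> expr_over G [a] \<Longrightarrow> atom_val G \<sigma> a \<in> carrier G"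
  by (cases a) (auto simp: assignment_def)

lemma expr_eval_closed [simp]:
  "assignment G \<sigma> \<Longrightarrow> expr_over G w \<Longrightarrow> expr_eval G \<sigma> w \<in> carrier G"
  by (induction w) (auto intro!: atom_val_closed)

lemma expr_eval_append:
  assumes "assignment G \<sigma>" "expr_over G u" "expr_over G v"
  shows "expr_eval G \<sigma> (u @ v) = expr_eval G \<sigma> u \<otimes> expr_eval G \<sigma> v"
  using assms(2)
proof (induction u)
  case (Cons a u)
  then show ?case
    using assms atom_val_closed[OF assms(1), of a] by (simp add: m_assoc)
qed (simp add: assms)

lemma expr_eval_inv_expr:
  assumes \<sigma>: "assignment G \<sigma>" and "expr_over G w"
  shows "expr_eval G \<sigma> (inv_expr G w) = inv (expr_eval G \<sigma> w)"
  using assms(2)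
proof (induction w)
  case (Cons a w)
  have a: "expr_over G [a]" and w: "expr_over G w" and a': "expr_over G [inv_atom G a]"
    using Cons.prems by (cases a; simp)+
  have "atom_val G \<sigma> (inv_atom G a) = inv (atom_val G \<sigma> a)"
    using Cons.prems \<sigma> by (cases a) (auto simp: assignment_def)
  then have "expr_eval G \<sigma> (inv_expr G (a # w)) = inv (expr_eval G \<sigma> w) \<otimes> inv (atom_val G \<sigma> a)"
    using Cons.IH[OF w] \<sigma> a' w atom_val_closed[OF \<sigma> a] by (simp add: expr_eval_append)
  then show ?case
    using \<sigma> w atom_val_closed[OF \<sigma> a] by (simp add: inv_mult_group)
qed simp

lemma expr_eval_subst:
  assumes \<sigma>: "assignment G \<sigma>" and "expr_over G w" and f: "\<And>i. expr_over G (f i)"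
  shows "expr_eval G \<sigma> (subst G f w) = expr_eval G (\<lambda>i. expr_eval G \<sigma> (f i)) w"
  using assms(2)
proof (induction w)
  case (Cons a w)
  have "expr_over G (subst_atom G f a)"
    using Cons.prems f by (cases a) auto
  moreover have "expr_eval G \<sigma> (subst_atom G f a) = atom_val G (\<lambda>i. expr_eval G \<sigma> (f i)) a"
    using Cons.prems \<sigma> f by (cases a) (auto simp: expr_eval_inv_expr)
  ultimately show ?case
    using Cons \<sigma> f by (simp add: expr_eval_append)
qed simp

lemma expr_eval_rename:
  "assignment G \<sigma> \<Longrightarrow> expr_over G w \<Longrightarrow> expr_eval G \<sigma> (rename G r w) = expr_eval G (\<sigma> \<circ> r) w"
  by (simp add: rename_def expr_eval_subst comp_def assignment_def)

lemma expr_eval_comm_expr: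
  assumes "assignment G \<sigma>" "expr_over G u" "expr_over G v"
  shows "expr_eval G \<sigma> (comm_expr G u v) = commutator G (expr_eval G \<sigma> u) (expr_eval G \<sigma> v)"
  using assms by (simp add: comm_expr_def expr_eval_append expr_eval_inv_expr commutator_def m_assoc)

end

definition univ_solutions :: "('g, 'b) monoid_scheme \<Rightarrow> 'g expr \<Rightarrow> 'g set" where
  "univ_solutions G \<alpha> =
     {g \<in> carrier G. \<forall>\<sigma>. assignment G \<sigma> \<longrightarrow> expr_eval G (\<sigma>(0 := g)) \<alpha> = \<one>\<^bsub>G\<^esub>}"

lemma aud_iff_univ_solutions: "aud G S \<longleftrightarrow> (\<exists>\<alpha>. expr_over G \<alpha> \<and> S = univ_solutions G \<alpha>)"
  by (simp add: aud_def univ_solutions_def)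

definition odd_var :: "nat \<Rightarrow> nat" where
  "odd_var = case_nat 0 (\<lambda>j. 2 * j + 1)"

text \<open>
  The universal variables of \<open>\<beta>\<close> are moved to the odd positions and those of \<open>\<alpha>\<close> to the
  positive even ones, so that they can be assigned independently.
\<close>
definition compose_expr :: "('g, 'b) monoid_scheme \<Rightarrow> 'g expr \<Rightarrow> 'g expr \<Rightarrow> 'g expr" where
  "compose_expr G \<alpha> \<beta> = subst G (case_nat (rename G odd_var \<beta>) (\<lambda>j. [Var (2 * j + 2)])) \<alpha>"

context group
begin

lemma aud_trivial: "aud G {\<one>}"
proof -
  have "univ_solutions G [Var 0] = {\<one>}"
    using assignment_upd[of G "\<lambda>_. \<one>"] by (auto simp: univ_solutions_def assignment_def)
  then show ?thesis
    unfolding aud_iff_univ_solutions by (metis expr_over_Cons expr_over_Nil atom.distinct(1))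
qed

lemma expr_over_compose_expr [simp]:
  "expr_over G \<alpha> \<Longrightarrow> expr_over G \<beta> \<Longrightarrow> expr_over G (compose_expr G \<alpha> \<beta>)"
  by (simp add: compose_expr_def split: nat.split)

lemma expr_eval_compose_expr:
  assumes \<sigma>: "assignment G \<sigma>" and \<alpha>: "expr_over G \<alpha>" and \<beta>: "expr_over G \<beta>"
  shows "expr_eval G \<sigma> (compose_expr G \<alpha> \<beta>) =
    expr_eval G ((\<lambda>i. \<sigma> (2 * i))(0 := expr_eval G (\<sigma> \<circ> odd_var) \<beta>)) \<alpha>"
proof -
  define f where "f = case_nat (rename G odd_var \<beta>) (\<lambda>j. [Var (2 * j + 2)])"
  have f: "expr_over G (f i)" for i
    using \<beta> by (simp add: f_def split: nat.split)
  have "(\<lambda>i. expr_eval G \<sigma> (f i)) = (\<lambda>i. \<sigma> (2 * i))(0 := expr_eval G (\<sigma> \<circ> odd_var) \<beta>)"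
    using \<sigma> \<beta> by (auto simp: f_def expr_eval_rename assignment_def split: nat.split)
  then show ?thesis
    using expr_eval_subst[OF \<sigma> \<alpha> f] by (simp add: compose_expr_def f_def)
qed

lemma univ_solutions_compose_expr:
  assumes \<alpha>: "expr_over G \<alpha>" and \<beta>: "expr_over G \<beta>"
  shows "univ_solutions G (compose_expr G \<alpha> \<beta>) =
    {g \<in> carrier G. \<forall>\<sigma>. assignment G \<sigma> \<longrightarrow> expr_eval G (\<sigma>(0 := g)) \<beta> \<in> univ_solutions G \<alpha>}"
  unfolding univ_solutions_def
proof (intro Collect_cong conj_cong refl iffI allI impI)
  fix g \<sigma> assume g: "g \<in> carrier G" and \<sigma>: "assignment G \<sigma>"
  let ?y = "expr_eval G (\<sigma>(0 := g)) \<beta>"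
  { assume sol: "\<forall>\<sigma>. assignment G \<sigma> \<longrightarrow> expr_eval G (\<sigma>(0 := g)) (compose_expr G \<alpha> \<beta>) = \<one>"
    have "expr_eval G (\<tau>(0 := ?y)) \<alpha> = \<one>" if \<tau>: "assignment G \<tau>" for \<tau>
    proof -
      define \<mu> where "\<mu> i = (if odd i then \<sigma> (Suc (i div 2)) else \<tau> (i div 2))" for i
      have \<mu>: "assignment G \<mu>"
        using \<sigma> \<tau> by (simp add: \<mu>_def assignment_def)
      have "\<mu>(0 := g) \<circ> odd_var = \<sigma>(0 := g)"
        by (auto simp: \<mu>_def odd_var_def split: nat.split)
      moreover have "(\<lambda>i. (\<mu>(0 := g)) (2 * i))(0 := ?y) = \<tau>(0 := ?y)"
        by (auto simp: \<mu>_def)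
      ultimately have "expr_eval G (\<mu>(0 := g)) (compose_expr G \<alpha> \<beta>) = expr_eval G (\<tau>(0 := ?y)) \<alpha>"
        using expr_eval_compose_expr[OF assignment_upd[OF \<mu> g] \<alpha> \<beta>] by simp
      then show ?thesis
        using sol \<mu> g by simp
    qed
    then show "?y \<in> {g \<in> carrier G. \<forall>\<tau>. assignment G \<tau> \<longrightarrow> expr_eval G (\<tau>(0 := g)) \<alpha> = \<one>}"
      using \<sigma> g \<beta> by simp }
  { assume "\<forall>\<sigma>. assignment G \<sigma> \<longrightarrow>
      expr_eval G (\<sigma>(0 := g)) \<beta> \<in> {g \<in> carrier G. \<forall>\<tau>. assignment G \<tau> \<longrightarrow> expr_eval G (\<tau>(0 := g)) \<alpha> = \<one>}"
    then have "expr_eval G ((\<lambda>i. \<sigma> (2 * i))(0 := expr_eval G ((\<sigma> \<circ> odd_var)(0 := g)) \<beta>)) \<alpha> = \<one>"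
      using \<sigma> by (simp add: assignment_def)
    moreover have "\<sigma>(0 := g) \<circ> odd_var = (\<sigma> \<circ> odd_var)(0 := g)"
      by (auto simp: odd_var_def split: nat.split)
    moreover have "(\<lambda>i. (\<sigma>(0 := g)) (2 * i))(0 := z) = (\<lambda>i. \<sigma> (2 * i))(0 := z)" for z
      by auto
    ultimately show "expr_eval G (\<sigma>(0 := g)) (compose_expr G \<alpha> \<beta>) = \<one>"
      using expr_eval_compose_expr[OF assignment_upd[OF \<sigma> g] \<alpha> \<beta>] by simp }
qed

lemma aud_universal_vimage:
  assumes "aud G S" and "expr_over G \<beta>"
  shows "aud G {g \<in> carrier G. \<forall>\<sigma>. assignment G \<sigma> \<longrightarrow> expr_eval G (\<sigma>(0 := g)) \<beta> \<in> S}"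
proof -
  obtain \<alpha> where \<alpha>: "expr_over G \<alpha>" and "S = univ_solutions G \<alpha>"
    using assms(1) by (auto simp: aud_iff_univ_solutions)
  then have "{g \<in> carrier G. \<forall>\<sigma>. assignment G \<sigma> \<longrightarrow> expr_eval G (\<sigma>(0 := g)) \<beta> \<in> S} =
      univ_solutions G (compose_expr G \<alpha> \<beta>)"
    using univ_solutions_compose_expr[OF \<alpha> assms(2)] by simp
  then show ?thesis
    unfolding aud_iff_univ_solutions using \<alpha> assms(2) expr_over_compose_expr by blast
qed

end

section \<open>Lifting expressions from a quotient group\<close>

definition lift_expr :: "'g set expr \<Rightarrow> 'g expr" where
  "lift_expr \<beta> = map (map_atom (\<lambda>C. SOME x. x \<in> C)) \<beta>"

lemma (in group_hom) normal_vimage: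
  assumes "N \<lhd> H"
  shows "{x \<in> carrier G. h x \<in> N} \<lhd> G"
proof -
  interpret N: normal N H by (rule assms)
  have "subgroup {x \<in> carrier G. h x \<in> N} G"
    by (rule G.subgroupI) (auto intro: N.m_closed N.m_inv_closed)
  moreover have "h (g \<otimes> x \<otimes> inv g) \<in> N" if "g \<in> carrier G" "x \<in> carrier G" "h x \<in> N" for g x
    using that N.inv_op_closed2 by simp
  ultimately show ?thesis
    by (auto simp: G.normal_inv_iff)
qed

context normal
begin

lemma some_rcos_elem:
  assumes "C \<in> carrier (G Mod H)"
  shows "(SOME x. x \<in> C) \<in> carrier G" and "H #> (SOME x. x \<in> C) = C"
proof -
  obtain a where a: "a \<in> carrier G" "C = H #> a"
    using assms unfolding carrier_FactGroup by blast
  then have "(SOME x. x \<in> C) \<in> C"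
    using rcos_self[OF a(1) subgroup_axioms] by (metis someI)
  then show "(SOME x. x \<in> C) \<in> carrier G" and "H #> (SOME x. x \<in> C) = C"
    using a repr_independence[OF _ a(1) subgroup_axioms] r_coset_subset_G[OF subset a(1)] by auto
qed

lemma expr_over_lift_expr: "expr_over (G Mod H) \<beta> \<Longrightarrow> expr_over G (lift_expr \<beta>)"
proof (induction \<beta>)
  case (Cons a \<beta>)
  then show ?case
    using some_rcos_elem(1) by (cases a) (auto simp: lift_expr_def)
qed (simp add: lift_expr_def)

lemma rcos_expr_eval_lift_expr:
  assumes \<sigma>: "assignment G \<sigma>" and "expr_over (G Mod H) \<beta>"
  shows "H #> expr_eval G \<sigma> (lift_expr \<beta>) = expr_eval (G Mod H) (\<lambda>i. H #> \<sigma> i) \<beta>"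
  using assms(2)
proof (induction \<beta>)
  case Nil
  then show ?case by (simp add: lift_expr_def subset)
next
  case (Cons a \<beta>)
  let ?a = "map_atom (\<lambda>C. SOME x. x \<in> C) a"
  have a: "expr_over G [?a]" and \<beta>: "expr_over G (lift_expr \<beta>)"
    using Cons.prems expr_over_lift_expr[of "[a]"] expr_over_lift_expr[of \<beta>]
    by (auto simp: lift_expr_def)
  have "H #> atom_val G \<sigma> ?a = atom_val (G Mod H) (\<lambda>i. H #> \<sigma> i) a"
    using Cons.prems \<sigma> some_rcos_elem(2)
    by (cases a) (auto simp: assignment_def rcos_inv inv_FactGroup carrier_FactGroup)
  moreover have "lift_expr (a # \<beta>) = ?a # lift_expr \<beta>"
    by (simp add: lift_expr_def)
  ultimately show ?case
    using Cons \<sigma> a \<beta> rcos_sum[OF atom_val_closed[OF \<sigma> a] expr_eval_closed[OF \<sigma> \<beta>]] by simp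
qed

lemma all_assignment_FactGroup:
  "(\<forall>\<pi>. assignment (G Mod H) \<pi> \<longrightarrow> P \<pi>) \<longleftrightarrow> (\<forall>\<sigma>. assignment G \<sigma> \<longrightarrow> P (\<lambda>i. H #> \<sigma> i))"
proof (intro iffI allI impI)
  fix \<pi> assume P: "\<forall>\<sigma>. assignment G \<sigma> \<longrightarrow> P (\<lambda>i. H #> \<sigma> i)" and \<pi>: "assignment (G Mod H) \<pi>"
  then have "assignment G (\<lambda>i. SOME x. x \<in> \<pi> i)" and "(\<lambda>i. H #> (SOME x. x \<in> \<pi> i)) = \<pi>"
    using some_rcos_elem by (auto simp: assignment_def)
  then show "P \<pi>"
    using P by metis
qed (auto simp: assignment_def carrier_FactGroup)

lemma aud_FactGroup_vimage:
  assumes "aud G H" and "aud (G Mod H) S"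
  shows "aud G {g \<in> carrier G. H #> g \<in> S}"
proof -
  obtain \<beta> where \<beta>: "expr_over (G Mod H) \<beta>" and S: "S = univ_solutions (G Mod H) \<beta>"
    using assms(2) by (auto simp: aud_iff_univ_solutions)
  have "H #> g \<in> S \<longleftrightarrow> (\<forall>\<sigma>. assignment G \<sigma> \<longrightarrow> expr_eval G (\<sigma>(0 := g)) (lift_expr \<beta>) \<in> H)"
    if g: "g \<in> carrier G" for g
  proof -
    have "expr_eval (G Mod H) ((\<lambda>i. H #> \<sigma> i)(0 := H #> g)) \<beta> = H \<longleftrightarrow>
        expr_eval G (\<sigma>(0 := g)) (lift_expr \<beta>) \<in> H" if \<sigma>: "assignment G \<sigma>" for \<sigma>
    proof -
      have "(\<lambda>i. H #> \<sigma> i)(0 := H #> g) = (\<lambda>i. H #> (\<sigma>(0 := g)) i)"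
        by (simp add: fun_eq_iff)
      then have "expr_eval (G Mod H) ((\<lambda>i. H #> \<sigma> i)(0 := H #> g)) \<beta>
          = H #> expr_eval G (\<sigma>(0 := g)) (lift_expr \<beta>)"
        using rcos_expr_eval_lift_expr[OF assignment_upd[OF \<sigma> g] \<beta>] by simp
      moreover have "expr_eval G (\<sigma>(0 := g)) (lift_expr \<beta>) \<in> carrier G"
        using \<sigma> g expr_over_lift_expr[OF \<beta>] by simp
      ultimately show ?thesis
        using coset_join1 coset_join2 subgroup_axioms by metis
    qed
    then show ?thesis
      unfolding S univ_solutions_def all_assignment_FactGroup using g
      by (simp add: carrier_FactGroup)
  qed
  then have "{g \<in> carrier G. H #> g \<in> S} =
      {g \<in> carrier G. \<forall>\<sigma>. assignment G \<sigma> \<longrightarrow> expr_eval G (\<sigma>(0 := g)) (lift_expr \<beta>) \<in> H}"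
    by blast
  then show ?thesis
    using aud_universal_vimage[OF assms(1) expr_over_lift_expr[OF \<beta>]] by simp
qed

lemma normal_FactGroup_vimage: "K \<lhd> G Mod H \<Longrightarrow> {g \<in> carrier G. H #> g \<in> K} \<lhd> G"
  using group_hom.normal_vimage[of G "G Mod H" "\<lambda>g. H #> g"] r_coset_hom_Mod
  by (simp add: group_hom_def group_hom_axioms_def is_group factorgroup_is_group)

lemma Union_FactGroup_subset:
  assumes "S \<subseteq> carrier (G Mod H)"
  shows "\<Union> S = {g \<in> carrier G. H #> g \<in> S}"
proof (intro equalityI subsetI)
  fix g assume "g \<in> \<Union> S"
  then obtain a where a: "a \<in> carrier G" "H #> a \<in> S" "g \<in> H #> a"
    using assms unfolding carrier_FactGroup by blast
  then have "g \<in> carrier G"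
    using r_coset_subset_G[OF subset a(1)] by blast
  then show "g \<in> {g \<in> carrier G. H #> g \<in> S}"
    using a repr_independence[OF _ _ subgroup_axioms] by auto
qed (use rcos_self[OF _ subgroup_axioms] in blast)

lemma rcos_vimage_image:
  assumes "subgroup K G" and "H \<subseteq> K"
  shows "{g \<in> carrier G. H #> g \<in> (\<lambda>k. H #> k) ` K} = K"
proof (intro equalityI subsetI)
  fix g assume "g \<in> {g \<in> carrier G. H #> g \<in> (\<lambda>k. H #> k) ` K}"
  then obtain k where "g \<in> carrier G" "k \<in> K" "H #> g = H #> k"
    by blast
  then have "g \<in> H #> k"
    using rcos_self[OF _ subgroup_axioms] by metis
  then obtain h where "h \<in> H" "g = h \<otimes> k"
    unfolding r_coset_def by blast
  then show "g \<in> K"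
    using assms \<open>k \<in> K\<close> by (auto intro: subgroup.m_closed)
qed (use assms subgroup.subset in blast)

end

primrec lower_central_in :: "('g, 'b) monoid_scheme \<Rightarrow> 'g set \<Rightarrow> nat \<Rightarrow> 'g set" where
  "lower_central_in G K 0 = K"
| "lower_central_in G K (Suc i) =
     generate G {commutator G x y | x y. x \<in> lower_central_in G K i \<and> y \<in> K}"

context group
begin

lemma inv_mult_cancel_left [simp]: "x \<in> carrier G \<Longrightarrow> y \<in> carrier G \<Longrightarrow> inv x \<otimes> (x \<otimes> y) = y"
  by (simp add: m_assoc[symmetric])

lemma mult_inv_cancel_left [simp]: "x \<in> carrier G \<Longrightarrow> y \<in> carrier G \<Longrightarrow> x \<otimes> (inv x \<otimes> y) = y"
  by (simp add: m_assoc[symmetric])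

lemma commutator_closed [simp]:
  "x \<in> carrier G \<Longrightarrow> y \<in> carrier G \<Longrightarrow> commutator G x y \<in> carrier G"
  by (simp add: commutator_def)

lemma commutator_one_left [simp]: "x \<in> carrier G \<Longrightarrow> commutator G \<one> x = \<one>"
  by (simp add: commutator_def)

lemma commutator_one_right [simp]: "x \<in> carrier G \<Longrightarrow> commutator G x \<one> = \<one>"
  by (simp add: commutator_def)

lemma commutator_mult_left:
  "\<lbrakk>a \<in> carrier G; b \<in> carrier G; s \<in> carrier G\<rbrakk> \<Longrightarrow>
    commutator G (a \<otimes> b) s = a \<otimes> commutator G b s \<otimes> inv a \<otimes> commutator G a s"
  by (simp add: commutator_def m_assoc inv_mult_group)

lemma commutator_inv_left:
  "\<lbrakk>a \<in> carrier G; s \<in> carrier G\<rbrakk> \<Longrightarrow>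
    commutator G (inv a) s = inv a \<otimes> inv (commutator G a s) \<otimes> a"
  by (simp add: commutator_def m_assoc inv_mult_group)

lemma commutator_mult_right:
  "\<lbrakk>a \<in> carrier G; b \<in> carrier G; s \<in> carrier G\<rbrakk> \<Longrightarrow>
    commutator G s (a \<otimes> b) = commutator G s a \<otimes> (a \<otimes> commutator G s b \<otimes> inv a)"
  by (simp add: commutator_def m_assoc inv_mult_group)

lemma commutator_inv_right:
  "\<lbrakk>a \<in> carrier G; s \<in> carrier G\<rbrakk> \<Longrightarrow>
    commutator G s (inv a) = inv a \<otimes> inv (commutator G s a) \<otimes> a"
  by (simp add: commutator_def m_assoc inv_mult_group)

lemma commutator_conj:
  "\<lbrakk>a \<in> carrier G; s \<in> carrier G; g \<in> carrier G\<rbrakk> \<Longrightarrow>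
    g \<otimes> commutator G a s \<otimes> inv g = commutator G (g \<otimes> a \<otimes> inv g) (g \<otimes> s \<otimes> inv g)"
  by (simp add: commutator_def m_assoc inv_mult_group)

lemma commutator_in_normal_left:
  assumes "N \<lhd> G" "x \<in> N" "s \<in> carrier G"
  shows "commutator G x s \<in> N"
proof -
  interpret N: normal N G by (rule assms(1))
  have "commutator G x s = x \<otimes> (s \<otimes> inv x \<otimes> inv s)"
    using assms by (simp add: commutator_def m_assoc)
  then show ?thesis
    using assms N.inv_op_closed2 by simp
qed

lemma commutator_in_normal_right:
  assumes "N \<lhd> G" "x \<in> carrier G" "s \<in> N"
  shows "commutator G x s \<in> N"
proof -
  interpret N: normal N G by (rule assms(1))
  have "commutator G x s = (x \<otimes> s \<otimes> inv x) \<otimes> inv s"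
    by (simp add: commutator_def)
  then show ?thesis
    using assms N.inv_op_closed2 by simp
qed

lemma commutator_eq_one_iff:
  assumes "x \<in> carrier G" "y \<in> carrier G"
  shows "commutator G x y = \<one> \<longleftrightarrow> x \<otimes> y = y \<otimes> x"
proof -
  have "commutator G x y = (x \<otimes> y) \<otimes> inv (y \<otimes> x)"
    using assms by (simp add: commutator_def inv_mult_group m_assoc)
  then show ?thesis
    using assms by (simp add: inv_solve_right' del: inv_mult_group)
qed

lemma lower_central_in_subset:
  assumes "subgroup K G"
  shows "lower_central_in G K i \<subseteq> K"
proof (induction i)
  case (Suc i)
  then have "{commutator G x y | x y. x \<in> lower_central_in G K i \<and> y \<in> K} \<subseteq> K"
    using assms by (auto simp: commutator_def subgroup.m_closed subgroup.m_inv_closed)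
  then show ?case
    using generate_subgroup_incl[OF _ assms] by simp
qed simp

lemma lower_central_in_subgroup:
  assumes "subgroup K G"
  shows "subgroup (lower_central_in G K i) G"
proof (cases i)
  case (Suc j)
  have "lower_central_in G K j \<subseteq> carrier G"
    using lower_central_in_subset[OF assms, of j] subgroup.subset[OF assms] by blast
  then have "{commutator G x y | x y. x \<in> lower_central_in G K j \<and> y \<in> K} \<subseteq> carrier G"
    using subgroup.subset[OF assms] by (auto intro!: commutator_closed)
  then show ?thesis
    using Suc generate_is_subgroup by simp
qed (simp add: assms)

lemma lower_central_restrict:
  assumes K: "subgroup K G"
  shows "lower_central (G\<lparr>carrier := K\<rparr>) i = lower_central_in G K i"
proof (induction i)
  case (Suc i)
  let ?C = "{commutator G x y | x y. x \<in> lower_central_in G K i \<and> y \<in> K}"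
  have eq: "x \<otimes> y \<otimes> inv\<^bsub>G\<lparr>carrier := K\<rparr>\<^esub> x \<otimes> inv\<^bsub>G\<lparr>carrier := K\<rparr>\<^esub> y = commutator G x y"
    if "x \<in> lower_central_in G K i" "y \<in> K" for x y
    using that lower_central_in_subset[OF K, of i] m_inv_consistent[OF K]
    by (auto simp: commutator_def)
  have "{x \<otimes> y \<otimes> inv\<^bsub>G\<lparr>carrier := K\<rparr>\<^esub> x \<otimes> inv\<^bsub>G\<lparr>carrier := K\<rparr>\<^esub> y | x y.
      x \<in> lower_central_in G K i \<and> y \<in> carrier (G\<lparr>carrier := K\<rparr>)} = ?C"
  proof (intro equalityI subsetI)
    fix z assume "z \<in> ?C"
    then obtain x y where "z = commutator G x y" "x \<in> lower_central_in G K i" "y \<in> K"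
      by blast
    then show "z \<in> {x \<otimes> y \<otimes> inv\<^bsub>G\<lparr>carrier := K\<rparr>\<^esub> x \<otimes> inv\<^bsub>G\<lparr>carrier := K\<rparr>\<^esub> y | x y.
        x \<in> lower_central_in G K i \<and> y \<in> carrier (G\<lparr>carrier := K\<rparr>)}"
      unfolding mem_Collect_eq using eq[of x y] by (intro exI[of _ x] exI[of _ y]) simp
  qed (auto simp: eq; blast)
  moreover have "?C \<subseteq> K"
    using lower_central_in_subset[OF K, of "Suc i"] generate.incl[of _ ?C G] by auto
  ultimately show ?case
    using Suc generate_consistent[OF _ K] by (simp add: comm_subgroup_def)
qed simp

lemma nilpotent_restrict_iff:
  assumes "subgroup K G"
  shows "nilpotent (G\<lparr>carrier := K\<rparr>) \<longleftrightarrow> (\<exists>n. lower_central_in G K n = {\<one>})"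
  using lower_central_restrict[OF assms] subgroup.subgroup_is_group[OF assms is_group]
  by (simp add: nilpotent_def)

lemma lower_central_in_normal:
  assumes "K \<lhd> G"
  shows "lower_central_in G K i \<lhd> G"
proof (induction i)
  case (Suc i)
  interpret K: normal K G by (rule assms)
  interpret L: normal "lower_central_in G K i" G by (rule Suc)
  show ?case
    unfolding lower_central_in.simps
  proof (rule normal_generateI)
    show "{commutator G x y | x y. x \<in> lower_central_in G K i \<and> y \<in> K} \<subseteq> carrier G"
      by auto
    fix h g assume "h \<in> {commutator G x y | x y. x \<in> lower_central_in G K i \<and> y \<in> K}"
      and g: "g \<in> carrier G"
    then obtain x y where h: "h = commutator G x y" "x \<in> lower_central_in G K i" "y \<in> K"
      by blast
    then have "g \<otimes> h \<otimes> inv g = commutator G (g \<otimes> x \<otimes> inv g) (g \<otimes> y \<otimes> inv g)"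
      using g commutator_conj by simp
    moreover have "g \<otimes> x \<otimes> inv g \<in> lower_central_in G K i" "g \<otimes> y \<otimes> inv g \<in> K"
      using g h K.inv_op_closed2 L.inv_op_closed2 by auto
    ultimately show "g \<otimes> h \<otimes> inv g \<in> {commutator G x y | x y. x \<in> lower_central_in G K i \<and> y \<in> K}"
      by blast
  qed
qed (simp add: assms)

lemma lower_central_in_antimono:
  assumes "K \<lhd> G" and "i \<le> j"
  shows "lower_central_in G K j \<subseteq> lower_central_in G K i"
  using assms(2)
proof (induction rule: dec_induct)
  case (step n)
  have "{commutator G x y | x y. x \<in> lower_central_in G K n \<and> y \<in> K} \<subseteq> lower_central_in G K n"
    using commutator_in_normal_left[OF lower_central_in_normal[OF assms(1)]]
      normal_imp_subgroup[OF assms(1)] subgroup.subset by blast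
  then have "lower_central_in G K (Suc n) \<subseteq> lower_central_in G K n"
    using generate_subgroup_incl lower_central_in_subgroup normal_imp_subgroup[OF assms(1)] by simp
  then show ?case
    using step by blast
qed simp

end

section \<open>A nilpotency criterion via left-normed commutators\<close>

primrec left_normed_comm :: "('g, 'b) monoid_scheme \<Rightarrow> 'g \<Rightarrow> (nat \<Rightarrow> 'g) \<Rightarrow> nat \<Rightarrow> 'g" where
  "left_normed_comm G a f 0 = a"
| "left_normed_comm G a f (Suc j) = commutator G (left_normed_comm G a f j) (f j)"

lemma left_normed_comm_Suc':
  "left_normed_comm G a f (Suc j) = left_normed_comm G (commutator G a (f 0)) (f \<circ> Suc) j"
  by (induction j) auto

definition conj_closed :: "('g, 'b) monoid_scheme \<Rightarrow> 'g set \<Rightarrow> bool" where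
  "conj_closed G S \<longleftrightarrow> S \<subseteq> carrier G \<and> (\<forall>g \<in> carrier G. \<forall>s \<in> S. g \<otimes>\<^bsub>G\<^esub> s \<otimes>\<^bsub>G\<^esub> inv\<^bsub>G\<^esub> g \<in> S)"

primrec higher_centralizer :: "('g, 'b) monoid_scheme \<Rightarrow> 'g set \<Rightarrow> nat \<Rightarrow> 'g set" where
  "higher_centralizer G S 0 = {\<one>\<^bsub>G\<^esub>}"
| "higher_centralizer G S (Suc j) =
     {a \<in> carrier G. \<forall>s \<in> S. commutator G a s \<in> higher_centralizer G S j}"

context group
begin

lemma left_normed_comm_in_lower_central_in:
  assumes "x \<in> K" and "range f \<subseteq> K"
  shows "left_normed_comm G x f j \<in> lower_central_in G K j"
  using assms by (induction j) (auto intro!: generate.incl)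

lemma conj_closed_Un_normal:
  assumes "M \<lhd> G" and "N \<lhd> G"
  shows "conj_closed G (M \<union> N)"
proof -
  interpret M: normal M G by (rule assms(1))
  interpret N: normal N G by (rule assms(2))
  show ?thesis
    using M.subset N.subset M.inv_op_closed2 N.inv_op_closed2 by (auto simp: conj_closed_def)
qed

lemma normal_generate_conj_closed: "conj_closed G S \<Longrightarrow> generate G S \<lhd> G"
  by (simp add: conj_closed_def normal_generateI)

lemma higher_centralizer_normal:
  assumes S: "conj_closed G S"
  shows "higher_centralizer G S j \<lhd> G"
proof (induction j)
  case (Suc j)
  interpret A: normal "higher_centralizer G S j" G by (rule Suc)
  have s: "s \<in> carrier G" if "s \<in> S" for s
    using S that by (auto simp: conj_closed_def)
  have "subgroup (higher_centralizer G S (Suc j)) G"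
  proof (rule subgroupI)
    show "higher_centralizer G S (Suc j) \<noteq> {}"
      using s by (auto intro!: exI[of _ \<one>])
    fix a assume a: "a \<in> higher_centralizer G S (Suc j)"
    then show "inv a \<in> higher_centralizer G S (Suc j)"
      using s commutator_inv_left A.inv_op_closed2[of "inv a"] by auto
    fix b assume "b \<in> higher_centralizer G S (Suc j)"
    then show "a \<otimes> b \<in> higher_centralizer G S (Suc j)"
      using a s commutator_mult_left A.inv_op_closed2 by auto
  qed auto
  moreover have "g \<otimes> a \<otimes> inv g \<in> higher_centralizer G S (Suc j)"
    if g: "g \<in> carrier G" and a: "a \<in> higher_centralizer G S (Suc j)" for g a
  proof -
    have "commutator G (g \<otimes> a \<otimes> inv g) s \<in> higher_centralizer G S j" if "s \<in> S" for s
    proof -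
      have s': "inv g \<otimes> s \<otimes> g \<in> S"
        using S g \<open>s \<in> S\<close> by (auto simp: conj_closed_def dest: bspec[of _ _ "inv g"])
      have "commutator G (g \<otimes> a \<otimes> inv g) s = g \<otimes> commutator G a (inv g \<otimes> s \<otimes> g) \<otimes> inv g"
        using g a s[OF that] commutator_conj[of a "inv g \<otimes> s \<otimes> g" g] by (simp add: m_assoc)
      then show ?thesis
        using g a s' A.inv_op_closed2 by auto
    qed
    then show ?thesis
      using g a by auto
  qed
  ultimately show ?case
    by (simp add: normal_inv_iff)
qed (simp add: one_is_normal)

lemma commutator_generate_higher_centralizer:
  assumes S: "conj_closed G S" and a: "a \<in> higher_centralizer G S (Suc j)"
    and k: "k \<in> generate G S"
  shows "commutator G a k \<in> higher_centralizer G S j"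
  using k
proof (induction rule: generate.induct)
  interpret A: normal "higher_centralizer G S j" G
    by (rule higher_centralizer_normal[OF S])
  have a_carrier: "a \<in> carrier G"
    using a by simp
  have S_carrier: "S \<subseteq> carrier G"
    using S by (simp add: conj_closed_def)
  { case one
    then show ?case
      using a_carrier by simp
  next
    case (incl h)
    then show ?case
      using a by simp
  next
    case (inv h)
    then show ?case
      using a a_carrier S_carrier commutator_inv_right A.inv_op_closed2[of "inv h"] by auto
  next
    case (eng h1 h2)
    then have "h1 \<in> carrier G" "h2 \<in> carrier G"
      using generate_in_carrier[OF S_carrier] by auto
    then show ?case
      using eng.IH a_carrier commutator_mult_right A.inv_op_closed2 by simp }
qed

lemma higher_centralizer_if_left_normed_comm_one:
  assumes S: "S \<subseteq> carrier G" "S \<noteq> {}" and "a \<in> carrier G"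
    and "\<And>f. range f \<subseteq> S \<Longrightarrow> left_normed_comm G a f j = \<one>"
  shows "a \<in> higher_centralizer G S j"
  using assms(3,4)
proof (induction j arbitrary: a)
  case 0
  obtain s where "s \<in> S"
    using S by blast
  then have "left_normed_comm G a (\<lambda>_. s) 0 = \<one>"
    by (intro "0.prems"(2)) auto
  then show ?case
    by simp
next
  case (Suc j)
  have "commutator G a s \<in> higher_centralizer G S j" if s: "s \<in> S" for s
  proof (rule Suc.IH)
    show "commutator G a s \<in> carrier G"
      using s S(1) Suc.prems(1) by (simp add: subset_iff)
    fix f :: "nat \<Rightarrow> 'a" assume f: "range f \<subseteq> S"
    have "range (case_nat s f) \<subseteq> S"
      using s f by (auto simp: image_subset_iff split: nat.split)
    then have "left_normed_comm G a (case_nat s f) (Suc j) = \<one>"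
      by (rule Suc.prems(2))
    moreover have "left_normed_comm G a (case_nat s f) (Suc j) = left_normed_comm G (commutator G a s) f j"
      by (simp only: left_normed_comm_Suc') (simp add: comp_def)
    ultimately show "left_normed_comm G (commutator G a s) f j = \<one>"
      by simp
  qed
  then show ?case
    using Suc.prems(1) by simp
qed

lemma lower_central_in_generate_trivial:
  assumes S: "conj_closed G S" "S \<noteq> {}"
    and comm: "\<And>x f. x \<in> S \<Longrightarrow> range f \<subseteq> S \<Longrightarrow> left_normed_comm G x f c = \<one>"
  shows "lower_central_in G (generate G S) c = {\<one>}"
proof -
  have S_carrier: "S \<subseteq> carrier G"
    using S by (simp add: conj_closed_def)
  have sub: "subgroup (higher_centralizer G S j) G" for j
    using higher_centralizer_normal[OF S(1)] normal_imp_subgroup by blast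
  have "S \<subseteq> higher_centralizer G S c"
    using higher_centralizer_if_left_normed_comm_one[OF S_carrier S(2)] S_carrier comm by blast
  then have "generate G S \<subseteq> higher_centralizer G S c"
    using generate_subgroup_incl[OF _ sub] by blast
  then have "lower_central_in G (generate G S) i \<subseteq> higher_centralizer G S (c - i)" if "i \<le> c" for i
    using that
  proof (induction i)
    case (Suc i)
    have "commutator G x y \<in> higher_centralizer G S (c - Suc i)"
      if "x \<in> lower_central_in G (generate G S) i" "y \<in> generate G S" for x y
    proof -
      have "x \<in> higher_centralizer G S (Suc (c - Suc i))"
        using Suc that(1) by (simp add: Suc_diff_Suc subset_iff)
      then show ?thesis
        using commutator_generate_higher_centralizer[OF S(1) _ that(2)] by blast
    qed
    then have "{commutator G x y | x y. x \<in> lower_central_in G (generate G S) i \<and> y \<in> generate G S}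
        \<subseteq> higher_centralizer G S (c - Suc i)"
      by blast
    then show ?case
      using generate_subgroup_incl[OF _ sub] by simp
  qed simp
  from this[of c] have "lower_central_in G (generate G S) c \<subseteq> {\<one>}"
    by simp
  moreover have "\<one> \<in> lower_central_in G (generate G S) c"
    using subgroup.one_closed[OF lower_central_in_subgroup[OF generate_is_subgroup[OF S_carrier]]] .
  ultimately show ?thesis
    by blast
qed

end

section \<open>Fitting's theorem\<close>

definition lower_central_weight :: "('g, 'b) monoid_scheme \<Rightarrow> 'g set \<Rightarrow> nat \<Rightarrow> 'g set" where
  "lower_central_weight G Q i = (case i of 0 \<Rightarrow> carrier G | Suc k \<Rightarrow> lower_central_in G Q k)"

context group
begin

lemma commutator_lower_central_weight_Suc:
  assumes Q: "Q \<lhd> G" and x: "x \<in> lower_central_weight G Q i" and s: "s \<in> Q"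
  shows "commutator G x s \<in> lower_central_weight G Q (Suc i)"
proof (cases i)
  case 0
  then show ?thesis
    using x s commutator_in_normal_right[OF Q] by (simp add: lower_central_weight_def)
next
  case (Suc k)
  then show ?thesis
    using x s by (auto simp: lower_central_weight_def intro!: generate.incl)
qed

lemma commutator_lower_central_weight:
  assumes Q: "Q \<lhd> G" and x: "x \<in> lower_central_weight G Q i" and s: "s \<in> carrier G"
  shows "commutator G x s \<in> lower_central_weight G Q i"
proof (cases i)
  case 0
  then show ?thesis
    using x s by (simp add: lower_central_weight_def)
next
  case (Suc k)
  then show ?thesis
    using x s commutator_in_normal_left[OF lower_central_in_normal[OF Q]]
    by (simp add: lower_central_weight_def)
qed

lemma left_normed_comm_lower_central_weight:
  assumes M: "M \<lhd> G" and N: "N \<lhd> G"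
    and x: "x \<in> M \<union> N" and f: "range f \<subseteq> M \<union> N"
  shows "\<exists>i j. i + j = Suc k \<and> left_normed_comm G x f k \<in> lower_central_weight G M i
                          \<and> left_normed_comm G x f k \<in> lower_central_weight G N j"
proof -
  interpret M: normal M G by (rule M)
  interpret N: normal N G by (rule N)
  have MN: "M \<union> N \<subseteq> carrier G"
    using M.subset N.subset by blast
  show ?thesis
  proof (induction k)
    case 0
    show ?case
    proof (cases "x \<in> M")
      case True
      then show ?thesis
        using MN x by (intro exI[of _ 1] exI[of _ 0]) (auto simp: lower_central_weight_def)
    next
      case False
      then show ?thesis
        using MN x by (intro exI[of _ 0] exI[of _ 1]) (auto simp: lower_central_weight_def)
    qed
  next
    case (Suc k)
    then obtain i j where ij: "i + j = Suc k"
      "left_normed_comm G x f k \<in> lower_central_weight G M i"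
      "left_normed_comm G x f k \<in> lower_central_weight G N j"
      by blast
    have fk: "f k \<in> M \<union> N"
      using f by blast
    show ?case
    proof (cases "f k \<in> M")
      case True
      then show ?thesis
        using ij fk MN commutator_lower_central_weight_Suc[OF M] commutator_lower_central_weight[OF N]
        by (intro exI[of _ "Suc i"] exI[of _ j]) auto
    next
      case False
      then show ?thesis
        using ij fk MN commutator_lower_central_weight_Suc[OF N] commutator_lower_central_weight[OF M]
        by (intro exI[of _ i] exI[of _ "Suc j"]) auto
    qed
  qed
qed

text \<open>
  Each of the a + b + 2 entries of a left-normed commutator of elements of M and N raises its
  weight with respect to M or to N, so one of the two weights exceeds a or b respectively.
\<close>
lemma lower_central_in_join_trivial:
  assumes M: "M \<lhd> G" and N: "N \<lhd> G"
    and a: "lower_central_in G M a = {\<one>}" and b: "lower_central_in G N b = {\<one>}"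
  shows "lower_central_in G (generate G (M \<union> N)) (a + b + 1) = {\<one>}"
proof (rule lower_central_in_generate_trivial)
  show "conj_closed G (M \<union> N)"
    using conj_closed_Un_normal[OF M N] .
  show "M \<union> N \<noteq> {}"
    using subgroup.one_closed[OF normal_imp_subgroup[OF M]] by blast
  fix x and f :: "nat \<Rightarrow> 'a" assume "x \<in> M \<union> N" and "range f \<subseteq> M \<union> N"
  then obtain i j where ij: "i + j = Suc (a + b + 1)"
    "left_normed_comm G x f (a + b + 1) \<in> lower_central_weight G M i"
    "left_normed_comm G x f (a + b + 1) \<in> lower_central_weight G N j"
    using left_normed_comm_lower_central_weight[OF M N] by blast
  show "left_normed_comm G x f (a + b + 1) = \<one>"
  proof (cases "a < i")
    case True
    then have "lower_central_weight G M i \<subseteq> lower_central_in G M a"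
      using lower_central_in_antimono[OF M] by (auto simp: lower_central_weight_def split: nat.split)
    then show ?thesis
      using ij(2) a by blast
  next
    case False
    then have "lower_central_weight G N j \<subseteq> lower_central_in G N b"
      using ij(1) lower_central_in_antimono[OF N] by (auto simp: lower_central_weight_def split: nat.split)
    then show ?thesis
      using ij(3) b by blast
  qed
qed

lemma nilpotent_normal_join:
  assumes M: "M \<lhd> G" "nilpotent (G\<lparr>carrier := M\<rparr>)"
    and N: "N \<lhd> G" "nilpotent (G\<lparr>carrier := N\<rparr>)"
  shows "generate G (M \<union> N) \<lhd> G" and "nilpotent (G\<lparr>carrier := generate G (M \<union> N)\<rparr>)"
proof -
  show J: "generate G (M \<union> N) \<lhd> G"
    using normal_generate_conj_closed[OF conj_closed_Un_normal[OF M(1) N(1)]] .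
  obtain a b where "lower_central_in G M a = {\<one>}" "lower_central_in G N b = {\<one>}"
    using M N nilpotent_restrict_iff normal_imp_subgroup by metis
  then show "nilpotent (G\<lparr>carrier := generate G (M \<union> N)\<rparr>)"
    using lower_central_in_join_trivial[OF M(1) N(1)] nilpotent_restrict_iff[OF normal_imp_subgroup[OF J]]
    by blast
qed

lemma exists_greatest_nilpotent_normal:
  assumes "finite (carrier G)"
  shows "\<exists>F. F \<lhd> G \<and> nilpotent (G\<lparr>carrier := F\<rparr>) \<and>
           (\<forall>M. M \<lhd> G \<and> nilpotent (G\<lparr>carrier := M\<rparr>) \<longrightarrow> M \<subseteq> F)"
proof -
  define \<N> where "\<N> = {N. N \<lhd> G \<and> nilpotent (G\<lparr>carrier := N\<rparr>)}"
  have "\<N> \<subseteq> Pow (carrier G)"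
    using normal_imp_subgroup subgroup.subset by (fastforce simp: \<N>_def)
  then have "finite \<N>"
    using assms finite_subset by blast
  moreover have "nilpotent (G\<lparr>carrier := {\<one>}\<rparr>)"
    unfolding nilpotent_restrict_iff[OF triv_subgroup] by (rule exI[of _ 0]) simp
  then have "{\<one>} \<in> \<N>"
    using one_is_normal by (simp add: \<N>_def)
  ultimately obtain F where F: "F \<in> \<N>" and maximal: "\<forall>M \<in> \<N>. F \<subseteq> M \<longrightarrow> F = M"
    using finite_has_maximal[of \<N>] by blast
  have "M \<subseteq> F" if M: "M \<in> \<N>" for M
  proof -
    have "generate G (M \<union> F) \<in> \<N>"
      using M F nilpotent_normal_join[of M F] by (simp add: \<N>_def)
    moreover have "M \<subseteq> generate G (M \<union> F)" and "F \<subseteq> generate G (M \<union> F)"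
      using generate.incl[of _ "M \<union> F" G] by blast+
    ultimately show ?thesis
      using maximal by metis
  qed
  then show ?thesis
    using F unfolding \<N>_def by blast
qed

lemma Fitting_greatest:
  assumes "finite (carrier G)"
  shows "Fitting G \<lhd> G" and "nilpotent (G\<lparr>carrier := Fitting G\<rparr>)"
    and "\<And>M. M \<lhd> G \<Longrightarrow> nilpotent (G\<lparr>carrier := M\<rparr>) \<Longrightarrow> M \<subseteq> Fitting G"
proof -
  obtain F where F: "F \<lhd> G \<and> nilpotent (G\<lparr>carrier := F\<rparr>) \<and>
      (\<forall>M. M \<lhd> G \<and> nilpotent (G\<lparr>carrier := M\<rparr>) \<longrightarrow> M \<subseteq> F)"
    using exists_greatest_nilpotent_normal[OF assms] by blast
  have "Fitting G = F"
    unfolding Fitting_def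
  proof (rule the_equality)
    fix N assume N: "N \<lhd> G \<and> nilpotent (G\<lparr>carrier := N\<rparr>) \<and>
      (\<forall>M. M \<lhd> G \<and> nilpotent (G\<lparr>carrier := M\<rparr>) \<longrightarrow> M \<subseteq> N)"
    then have "N \<subseteq> F" and "F \<subseteq> N"
      using F by simp_all
    then show "N = F"
      by (rule subset_antisym)
  qed (rule F)
  then show "Fitting G \<lhd> G" and "nilpotent (G\<lparr>carrier := Fitting G\<rparr>)"
    and "\<And>M. M \<lhd> G \<Longrightarrow> nilpotent (G\<lparr>carrier := M\<rparr>) \<Longrightarrow> M \<subseteq> Fitting G"
    using F by simp_all
qed

end

definition conj_class :: "('g, 'b) monoid_scheme \<Rightarrow> 'g \<Rightarrow> 'g set" where
  "conj_class G g = {y \<otimes>\<^bsub>G\<^esub> g \<otimes>\<^bsub>G\<^esub> inv\<^bsub>G\<^esub> y | y. y \<in> carrier G}"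

definition conjugate_expr :: "nat \<Rightarrow> 'g expr" where
  "conjugate_expr i = [Var (Suc i), Var 0, InvVar (Suc i)]"

primrec left_normed_conjugates_expr :: "('g, 'b) monoid_scheme \<Rightarrow> nat \<Rightarrow> 'g expr" where
  "left_normed_conjugates_expr G 0 = conjugate_expr 0"
| "left_normed_conjugates_expr G (Suc j) =
     comm_expr G (left_normed_conjugates_expr G j) (conjugate_expr (Suc j))"

context group
begin

lemma conj_closed_conj_class:
  assumes "g \<in> carrier G"
  shows "conj_closed G (conj_class G g)"
  unfolding conj_closed_def
proof (intro conjI ballI)
  fix h s assume h: "h \<in> carrier G" and "s \<in> conj_class G g"
  then obtain y where y: "y \<in> carrier G" "s = y \<otimes> g \<otimes> inv y"
    by (auto simp: conj_class_def)
  then have "h \<otimes> s \<otimes> inv h = (h \<otimes> y) \<otimes> g \<otimes> inv (h \<otimes> y)"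
    using h assms by (simp add: m_assoc inv_mult_group)
  then show "h \<otimes> s \<otimes> inv h \<in> conj_class G g"
    using h y by (auto simp: conj_class_def)
qed (use assms in \<open>auto simp: conj_class_def\<close>)

lemma self_in_conj_class: "g \<in> carrier G \<Longrightarrow> g \<in> conj_class G g"
  unfolding conj_class_def by (auto intro!: exI[of _ \<one>])

lemma expr_over_conjugate_expr [simp]: "expr_over G (conjugate_expr i)"
  by (simp add: conjugate_expr_def)

lemma expr_over_left_normed_conjugates_expr [simp]: "expr_over G (left_normed_conjugates_expr G j)"
  by (induction j) simp_all

lemma expr_eval_left_normed_conjugates_expr:
  assumes "assignment G \<sigma>"
  shows "expr_eval G \<sigma> (left_normed_conjugates_expr G j) =
    left_normed_comm G (\<sigma> 1 \<otimes> \<sigma> 0 \<otimes> inv (\<sigma> 1)) (\<lambda>i. \<sigma> (i + 2) \<otimes> \<sigma> 0 \<otimes> inv (\<sigma> (i + 2))) j"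
proof -
  have conj: "expr_eval G \<sigma> (conjugate_expr i) = \<sigma> (Suc i) \<otimes> \<sigma> 0 \<otimes> inv (\<sigma> (Suc i))" for i
    using assms by (simp add: conjugate_expr_def assignment_def m_assoc)
  show ?thesis
    by (induction j) (simp_all add: conj expr_eval_comm_expr assms)
qed

lemma univ_solutions_left_normed_conjugates_expr:
  "univ_solutions G (left_normed_conjugates_expr G c) =
    {g \<in> carrier G. \<forall>x f. x \<in> conj_class G g \<longrightarrow> range f \<subseteq> conj_class G g \<longrightarrow>
                          left_normed_comm G x f c = \<one>}"
  unfolding univ_solutions_def
proof (intro Collect_cong conj_cong refl iffI allI impI)
  fix g assume g: "g \<in> carrier G"
  { fix \<sigma> assume \<sigma>: "assignment G \<sigma>"
      and comm: "\<forall>x f. x \<in> conj_class G g \<longrightarrow> range f \<subseteq> conj_class G g \<longrightarrow> left_normed_comm G x f c = \<one>"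
    have conj: "\<sigma> i \<otimes> g \<otimes> inv (\<sigma> i) \<in> conj_class G g" for i
      using \<sigma> by (auto simp: conj_class_def assignment_def)
    then have "range (\<lambda>i. \<sigma> (i + 2) \<otimes> g \<otimes> inv (\<sigma> (i + 2))) \<subseteq> conj_class G g"
      by blast
    then have "left_normed_comm G (\<sigma> 1 \<otimes> g \<otimes> inv (\<sigma> 1)) (\<lambda>i. \<sigma> (i + 2) \<otimes> g \<otimes> inv (\<sigma> (i + 2))) c = \<one>"
      using comm conj by simp
    then show "expr_eval G (\<sigma>(0 := g)) (left_normed_conjugates_expr G c) = \<one>"
      using \<sigma> g by (simp add: expr_eval_left_normed_conjugates_expr)
  }
  fix x and f :: "nat \<Rightarrow> 'a"
  assume sol: "\<forall>\<sigma>. assignment G \<sigma> \<longrightarrow> expr_eval G (\<sigma>(0 := g)) (left_normed_conjugates_expr G c) = \<one>"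
    and x: "x \<in> conj_class G g" and f: "range f \<subseteq> conj_class G g"
  obtain y where y: "y \<in> carrier G" "x = y \<otimes> g \<otimes> inv y"
    using x by (auto simp: conj_class_def)
  have "\<forall>i. \<exists>y. y \<in> carrier G \<and> f i = y \<otimes> g \<otimes> inv y"
    using f by (auto simp: conj_class_def)
  then obtain ys where ys: "\<And>i. ys i \<in> carrier G \<and> f i = ys i \<otimes> g \<otimes> inv (ys i)"
    by metis
  define \<sigma> where "\<sigma> = case_nat \<one> (case_nat y ys)"
  have "assignment G \<sigma>"
    using y ys by (simp add: \<sigma>_def assignment_def split: nat.split)
  then have "expr_eval G (\<sigma>(0 := g)) (left_normed_conjugates_expr G c) = \<one>"
    using sol by blast
  moreover have "(\<lambda>i. ys i \<otimes> g \<otimes> inv (ys i)) = f"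
    using ys by auto
  ultimately show "left_normed_comm G x f c = \<one>"
    using \<open>assignment G \<sigma>\<close> g y
    by (simp add: expr_eval_left_normed_conjugates_expr \<sigma>_def)
qed

lemma aud_Fitting:
  assumes fin: "finite (carrier G)"
  shows "aud G (Fitting G)"
proof -
  interpret F: normal "Fitting G" G
    by (rule Fitting_greatest(1)[OF fin])
  obtain c where c: "lower_central_in G (Fitting G) c = {\<one>}"
    using Fitting_greatest(2)[OF fin] nilpotent_restrict_iff[OF F.subgroup_axioms] by blast
  have "Fitting G = univ_solutions G (left_normed_conjugates_expr G c)"
    unfolding univ_solutions_left_normed_conjugates_expr
  proof (intro equalityI subsetI CollectI conjI allI impI)
    fix g x and f :: "nat \<Rightarrow> 'a" assume "g \<in> Fitting G" "x \<in> conj_class G g" "range f \<subseteq> conj_class G g"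
    moreover have "conj_class G g \<subseteq> Fitting G"
      using \<open>g \<in> Fitting G\<close> F.inv_op_closed2 by (auto simp: conj_class_def)
    ultimately show "left_normed_comm G x f c = \<one>"
      using left_normed_comm_in_lower_central_in[of x "Fitting G" f c] c by auto
  next
    fix g
    assume "g \<in> {g \<in> carrier G. \<forall>x f. x \<in> conj_class G g \<longrightarrow> range f \<subseteq> conj_class G g \<longrightarrow>
                                   left_normed_comm G x f c = \<one>}"
    then have g: "g \<in> carrier G"
      and comm: "\<And>x f. x \<in> conj_class G g \<Longrightarrow> range f \<subseteq> conj_class G g \<Longrightarrow> left_normed_comm G x f c = \<one>"
      by auto
    have "lower_central_in G (generate G (conj_class G g)) c = {\<one>}"
      using lower_central_in_generate_trivial[OF conj_closed_conj_class[OF g]] self_in_conj_class[OF g] comm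
      by blast
    moreover have K: "generate G (conj_class G g) \<lhd> G"
      using normal_generate_conj_closed[OF conj_closed_conj_class[OF g]] .
    ultimately have "nilpotent (G\<lparr>carrier := generate G (conj_class G g)\<rparr>)"
      using nilpotent_restrict_iff[OF normal_imp_subgroup[OF K]] by blast
    then have "generate G (conj_class G g) \<subseteq> Fitting G"
      using Fitting_greatest(3)[OF fin K] by blast
    then show "g \<in> Fitting G"
      using generate.incl[OF self_in_conj_class[OF g]] by blast
  qed (use F.subset in blast)
  then show ?thesis
    unfolding aud_iff_univ_solutions using expr_over_left_normed_conjugates_expr by blast
qed

end

context group
begin

lemma aud_centralizer:
  assumes "inducible G H"
  shows "aud G {g \<in> carrier G. \<forall>h \<in> H. g \<otimes> h = h \<otimes> g}"
proof -
  obtain w where w: "expr_over G w" and H: "H = {expr_eval G \<sigma> w | \<sigma>. assignment G \<sigma>}"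
    using assms by (auto simp: inducible_def)
  define \<delta> where "\<delta> = comm_expr G [Var 0] (rename G Suc w)"
  have \<delta>: "expr_over G \<delta>"
    using w by (simp add: \<delta>_def)
  have "(\<forall>\<sigma>. assignment G \<sigma> \<longrightarrow> expr_eval G (\<sigma>(0 := g)) \<delta> = \<one>) \<longleftrightarrow> (\<forall>h \<in> H. g \<otimes> h = h \<otimes> g)"
    if g: "g \<in> carrier G" for g
  proof -
    have "expr_eval G (\<sigma>(0 := g)) \<delta> = \<one> \<longleftrightarrow> g \<otimes> expr_eval G (\<sigma> \<circ> Suc) w = expr_eval G (\<sigma> \<circ> Suc) w \<otimes> g"
      if \<sigma>: "assignment G \<sigma>" for \<sigma>
    proof -
      have "\<sigma>(0 := g) \<circ> Suc = \<sigma> \<circ> Suc"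
        by auto
      then show ?thesis
        using \<sigma> g w
        by (simp add: \<delta>_def expr_eval_comm_expr expr_eval_rename commutator_eq_one_iff)
    qed
    then have "(\<forall>\<sigma>. assignment G \<sigma> \<longrightarrow> expr_eval G (\<sigma>(0 := g)) \<delta> = \<one>) \<longleftrightarrow>
        (\<forall>\<sigma>. assignment G \<sigma> \<longrightarrow> g \<otimes> expr_eval G (\<sigma> \<circ> Suc) w = expr_eval G (\<sigma> \<circ> Suc) w \<otimes> g)"
      by blast
    also have "\<dots> \<longleftrightarrow> (\<forall>\<sigma>. assignment G \<sigma> \<longrightarrow> g \<otimes> expr_eval G \<sigma> w = expr_eval G \<sigma> w \<otimes> g)"
      using all_assignment_comp_Suc[where P = "\<lambda>\<tau>. g \<otimes> expr_eval G \<tau> w = expr_eval G \<tau> w \<otimes> g"]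
      by simp
    also have "\<dots> \<longleftrightarrow> (\<forall>h \<in> H. g \<otimes> h = h \<otimes> g)"
      unfolding H by blast
    finally show ?thesis .
  qed
  then have "univ_solutions G \<delta> = {g \<in> carrier G. \<forall>h \<in> H. g \<otimes> h = h \<otimes> g}"
    unfolding univ_solutions_def by blast
  then show ?thesis
    using \<delta> unfolding aud_iff_univ_solutions by blast
qed

lemma upper_Fitting_normal_aud:
  assumes fin: "finite (carrier G)"
  shows "upper_Fitting G i \<lhd> G \<and> aud G (upper_Fitting G i)"
proof (induction i)
  case 0
  then show ?case
    using one_is_normal aud_trivial by simp
next
  case (Suc i)
  interpret U: normal "upper_Fitting G i" G
    using Suc by blast
  interpret Q: group "G Mod upper_Fitting G i"
    by (rule U.factorgroup_is_group)
  let ?F = "Fitting (G Mod upper_Fitting G i)"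
  have "finite (carrier (G Mod upper_Fitting G i))"
    using fin by (simp add: carrier_FactGroup RCOSETS_def)
  then have F: "?F \<lhd> G Mod upper_Fitting G i" and "aud (G Mod upper_Fitting G i) ?F"
    using Q.Fitting_greatest(1) Q.aud_Fitting by blast+
  moreover have "upper_Fitting G (Suc i) = {g \<in> carrier G. upper_Fitting G i #> g \<in> ?F}"
    using U.Union_FactGroup_subset[OF subgroup.subset[OF normal_imp_subgroup[OF F]]] by simp
  ultimately show ?case
    using Suc U.normal_FactGroup_vimage U.aud_FactGroup_vimage by simp
qed

end

theorem lemma2p6:
  fixes G :: "('a, 'b) monoid_scheme"
  assumes "group G" and "finite (carrier G)"
  shows "aud G (Fitting G)
    \<and> (\<forall>N H. subgroup N G \<longrightarrow> N \<lhd> G \<longrightarrow> subgroup H G \<longrightarrow> N \<subseteq> H \<longrightarrow>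
            aud (G Mod N) ((\<lambda>h. N #>\<^bsub>G\<^esub> h) ` H) \<longrightarrow> aud G N \<longrightarrow> aud G H)
    \<and> (\<forall>i. aud G (upper_Fitting G i))
    \<and> (\<forall>H. subgroup H G \<longrightarrow> inducible G H \<longrightarrow>
            aud G {g \<in> carrier G. \<forall>h\<in>H. g \<otimes>\<^bsub>G\<^esub> h = h \<otimes>\<^bsub>G\<^esub> g})"
proof (intro conjI allI impI)
  interpret group G
    by (rule assms(1))
  show "aud G (Fitting G)"
    using aud_Fitting[OF assms(2)] .
  show "aud G (upper_Fitting G i)" for i
    using upper_Fitting_normal_aud[OF assms(2)] by blast
  show "aud G {g \<in> carrier G. \<forall>h\<in>H. g \<otimes>\<^bsub>G\<^esub> h = h \<otimes>\<^bsub>G\<^esub> g}" if "inducible G H" for H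
    using aud_centralizer[OF that] .
  fix N H
  assume "N \<lhd> G" "subgroup H G" "N \<subseteq> H"
    and "aud (G Mod N) ((\<lambda>h. N #>\<^bsub>G\<^esub> h) ` H)" "aud G N"
  then show "aud G H"
    using normal.aud_FactGroup_vimage normal.rcos_vimage_image by metis
qed

end
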